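(* Let $B$ be a connected building set on $[n]$. Then $$F(P_B)=\sum_{v}F(T_v),$$ where the sum runs over all vertices $v$ of the nestohedron $P_B$ and $T_v$ is the $B$-tree of $v$.
   Context: A building set on a finite set $V$ is a collection $B$ of nonempty subsets of $V$ such that $\{v\}\in B$ for all $v\in V$ and such that $I,J\in B$, $I\cap J\neq\emptyset$ imply $I\cup J\in B$; it is connected if $V\in B$. The nestohedron of $B$ is $P_B=\sum_{I\in B}\mathrm{Conv}\{e_i: i\in I\}\subset\mathbb{R}^V$. For a convex polytope $Q\subset\mathbb{R}^n$, $f:[n]\to\mathbb{N}=\{1,2,\dots\}$ is $Q$-generic if $x\mapsto\sum_i f(i)x_i$ attains its maximum over $Q$ at a unique point, and $F(Q)=\sum_{f\ Q\text{-generic}}x_{f(1)}\cdots x_{f(n)}$. For a connected building set $B$ on $[n]$, a nested set is a subcollection $N\subseteq B\setminus\{[n]\}$ such that (N1) any two members of $N$ are either comparable by inclusion or disjoint, and (N2) the union of any $p\ge2$ pairwise disjoint members of $N$ does not belong to $B$. The facets of $P_B$ are $F_I=P_B\cap\{x:\sum_{i\in I}x_i=|\{J\in B:J\subseteq I\}|\}$ for $I\in B\setminus\{[n]\}$, and $v\mapsto N_v=\{I: v\in F_I\}$ is a bijection from the vertices of $P_B$ to the maximal nested sets. For a vertex $v$ and $I\in N_v\cup\{[n]\}$, the set $I\setminus\bigcup\{J\in N_v:J\subsetneq I\}$ consists of a single element $i_I$, and $I\mapsto i_I$ is a bijection $N_v\cup\{[n]\}\to[n]$. The poset $P_v$ on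 $[n]$ is defined by $i_I\le i_J$ iff $I\subseteq J$; its Hasse diagram is a rooted tree $T_v$ (the $B$-tree of $v$) with root $i_{[n]}$. For a rooted tree $T$, a $T$-partition is a function $f$ from the vertices to $\mathbb{N}$ with $f(u)<f(w)$ whenever $w$ is the parent of $u$, and $F(T)=\sum_f\prod_u x_{f(u)}$ over all $T$-partitions. *)

theory Defs
  imports "HOL-Analysis.Analysis" "HOL-Library.Multiset"
begin

text \<open>The ground set [n] is rendered as the universe of a finite type 'a;
  points of R^V are vectors of type real^'a.\<close>

definition building_set :: "'a set set \<Rightarrow> bool" where
  "building_set B \<longleftrightarrow>
     (\<forall>I\<in>B. I \<noteq> {}) \<and> (\<forall>v. {v} \<in> B) \<and>
     (\<forall>I\<in>B. \<forall>J\<in>B. I \<inter> J \<noteq> {} \<longrightarrow> I \<union> J \<in> B)"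

definition connected_building_set :: "('a::finite) set set \<Rightarrow> bool" where
  "connected_building_set B \<longleftrightarrow> building_set B \<and> UNIV \<in> B"

definition simplex_of :: "('a::finite) set \<Rightarrow> (real^'a) set" where
  "simplex_of I = convex hull ((\<lambda>i. axis i 1) ` I)"

definition nestohedron :: "('a::finite) set set \<Rightarrow> (real^'a) set" where
  "nestohedron B = {(\<Sum>I\<in>B. p I) | p. \<forall>I\<in>B. p I \<in> simplex_of I}"

definition generic :: "(real^'a::finite) set \<Rightarrow> ('a \<Rightarrow> nat) \<Rightarrow> bool" where
  "generic Q f \<longleftrightarrow>
     (\<exists>!x. x \<in> Q \<and> (\<forall>y\<in>Q. (\<Sum>i\<in>UNIV. real (f i) * y $ i) \<le> (\<Sum>i\<in>UNIV. real (f i) * x $ i)))"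

definition vertices :: "(real^'a::finite) set \<Rightarrow> (real^'a) set" where
  "vertices P = {v. v extreme_point_of P}"

definition facet :: "('a::finite) set set \<Rightarrow> 'a set \<Rightarrow> (real^'a) set" where
  "facet B I = nestohedron B \<inter>
     {x. (\<Sum>i\<in>I. x $ i) = real (card {J\<in>B. J \<subseteq> I})}"

definition nested_of :: "('a::finite) set set \<Rightarrow> (real^'a) \<Rightarrow> 'a set set" where
  "nested_of B v = {I \<in> B - {UNIV}. v \<in> facet B I}"

definition elem_of :: "('a::finite) set set \<Rightarrow> (real^'a) \<Rightarrow> 'a set \<Rightarrow> 'a" where
  "elem_of B v I = (THE i. i \<in> I - \<Union>{J \<in> nested_of B v. J \<subset> I})"

definition bleq :: "('a::finite) set set \<Rightarrow> (real^'a) \<Rightarrow> 'a \<Rightarrow> 'a \<Rightarrow> bool" where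
  "bleq B v i j \<longleftrightarrow>
     (\<exists>I\<in>nested_of B v \<union> {UNIV}. \<exists>J\<in>nested_of B v \<union> {UNIV}.
        i = elem_of B v I \<and> j = elem_of B v J \<and> I \<subseteq> J)"

definition bless :: "('a::finite) set set \<Rightarrow> (real^'a) \<Rightarrow> 'a \<Rightarrow> 'a \<Rightarrow> bool" where
  "bless B v i j \<longleftrightarrow> bleq B v i j \<and> i \<noteq> j"

definition tree_parent :: "('a::finite) set set \<Rightarrow> (real^'a) \<Rightarrow> 'a \<Rightarrow> 'a \<Rightarrow> bool" where
  "tree_parent B v u w \<longleftrightarrow> bless B v u w \<and> \<not> (\<exists>z. bless B v u z \<and> bless B v z w)"

definition tree_partition :: "('a::finite) set set \<Rightarrow> (real^'a) \<Rightarrow> ('a \<Rightarrow> nat) \<Rightarrow> bool" where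
  "tree_partition B v f \<longleftrightarrow> (\<forall>u. 0 < f u) \<and> (\<forall>u w. tree_parent B v u w \<longrightarrow> f u < f w)"

text \<open>The monomial x_{f(1)}...x_{f(n)} is encoded by the multiset of values of f.
  A formal power series sum over a set of f's is encoded by its coefficient function.\<close>
definition monomial_of :: "('a::finite \<Rightarrow> nat) \<Rightarrow> nat multiset" where
  "monomial_of f = image_mset f (mset_set UNIV)"

definition F_poly_coeff :: "(real^'a::finite) set \<Rightarrow> nat multiset \<Rightarrow> nat" where
  "F_poly_coeff Q M = card {f. (\<forall>i. 0 < f i) \<and> generic Q f \<and> monomial_of f = M}"

definition F_tree_coeff :: "('a::finite) set set \<Rightarrow> (real^'a) \<Rightarrow> nat multiset \<Rightarrow> nat" where
  "F_tree_coeff B v M = card {f. tree_partition B v f \<and> monomial_of f = M}"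

end

theory Submission
  imports Defs
begin

(* For a weight w the functional <w,x> = sum_i w(i) x_i is maximised on the
   Minkowski sum P_B = sum_{I in B} Delta_I by maximising it on every simplex Delta_I
   separately, and the maximiser on Delta_I is unique iff w has a strict argmax c(I) on I.
   Hence w has a unique maximiser on P_B iff every I in B has a strict argmax, the maximiser
   being the "choice point" sum_{I in B} e_{c(I)}.  Every vertex of the polytope P_B is the
   unique maximiser of some weight, so every vertex is such a choice point.

   The
   locale strict_choice then fixes a vertex v = sum_I e_{c(I)} and identifies the data of
   the statement combinatorially via the blocks block(i) = union of the members of B with
   chosen element i: v lies on F_I iff I is closed under c, i_I = c(I), and i <= j in P_v
   iff block(i) is contained in block(j).  Consequently h is a T_v-partition iff h is
   positive and v is the unique maximiser of h.  The theorem follows by sorting the positive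
   generic h according to their unique maximiser, which is always a vertex. *)

definition pairing :: "('a::finite \<Rightarrow> real) \<Rightarrow> real^'a \<Rightarrow> real" where
  "pairing w x = (\<Sum>i\<in>UNIV. w i * x$i)"

definition maximizer :: "('a::finite \<Rightarrow> real) \<Rightarrow> (real^'a) set \<Rightarrow> real^'a \<Rightarrow> bool" where
  "maximizer w P x \<longleftrightarrow> x \<in> P \<and> (\<forall>y\<in>P. pairing w y \<le> pairing w x)"

definition unique_maximizer :: "('a::finite \<Rightarrow> real) \<Rightarrow> (real^'a) set \<Rightarrow> real^'a \<Rightarrow> bool" where
  "unique_maximizer w P x \<longleftrightarrow> maximizer w P x \<and> (\<forall>y. maximizer w P y \<longrightarrow> y = x)"

lemma generic_iff_unique_maximizer:
  "generic Q h \<longleftrightarrow> (\<exists>x. unique_maximizer (\<lambda>i. real (h i)) Q x)"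
  unfolding generic_def unique_maximizer_def maximizer_def pairing_def by blast

lemma pairing_sum: "pairing w (sum p C) = (\<Sum>J\<in>C. pairing w (p J))"
  by (simp add: pairing_def sum_distrib_left sum.swap[of _ C])

lemma pairing_axis: "pairing w (axis m 1) = w m"
  unfolding pairing_def axis_def by (subst sum.remove[of _ m]) auto

lemma pairing_segment:
  "pairing w ((1 - u) *\<^sub>R a + u *\<^sub>R b) = (1 - u) * pairing w a + u * pairing w b"
  by (simp add: pairing_def algebra_simps sum.distrib sum_distrib_left sum_subtractf)

text \<open>A unique maximiser of a linear functional is an extreme point: it cannot lie strictly
  inside a segment, since then both endpoints would be maximisers as well.\<close>
lemma unique_maximizer_extreme_point:
  assumes "unique_maximizer w P x"
  shows "x extreme_point_of P"
  unfolding extreme_point_of_def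
proof (intro conjI ballI)
  have m: "maximizer w P x" and u: "\<And>y. maximizer w P y \<Longrightarrow> y = x"
    using assms by (auto simp: unique_maximizer_def)
  show "x \<in> P" using m by (simp add: maximizer_def)
  fix a b assume a: "a \<in> P" and b: "b \<in> P"
  show "x \<notin> open_segment a b"
  proof
    assume xs: "x \<in> open_segment a b"
    then obtain t where t: "0 < t" "t < 1" and x: "x = (1 - t) *\<^sub>R a + t *\<^sub>R b"
      by (auto simp: in_segment)
    have la: "pairing w a \<le> pairing w x" and lb: "pairing w b \<le> pairing w x"
      using m a b by (auto simp: maximizer_def)
    have lx: "pairing w x = (1 - t) * pairing w a + t * pairing w b"
      using x pairing_segment by simp
    have "pairing w a = pairing w x"
    proof (rule ccontr)
      assume "pairing w a \<noteq> pairing w x"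
      with la have "(1 - t) * pairing w a < (1 - t) * pairing w x" using t by simp
      moreover have "t * pairing w b \<le> t * pairing w x" using lb t by simp
      moreover have "(1 - t) * pairing w x + t * pairing w x = pairing w x"
        by (simp add: algebra_simps)
      ultimately show False using lx by linarith
    qed
    then have "maximizer w P a" using m a by (simp add: maximizer_def)
    then have "a = x" by (rule u)
    with xs show False by (simp add: open_segment_def)
  qed
qed

text \<open>Conversely, every extreme point of a polyhedron is exposed, hence the unique
  maximiser of some linear functional.\<close>
lemma extreme_point_unique_maximizer:
  fixes P :: "(real^'a::finite) set"
  assumes P: "polyhedron P" and v: "v extreme_point_of P"
  obtains w where "unique_maximizer w P v"
proof -
  have vP: "v \<in> P" using v by (simp add: extreme_point_of_def)
  have "{v} exposed_face_of P"
    using v exposed_face_of_polyhedron[OF P] by (simp add: face_of_singleton)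
  then consider "{v} = P"
    | a b where "P \<subseteq> {x. a \<bullet> x \<le> b}" "{v} = P \<inter> {x. a \<bullet> x = b}"
    unfolding exposed_face_of by blast
  then show ?thesis
  proof cases
    case 1
    then have "unique_maximizer (\<lambda>_. 0) P v"
      by (auto simp: unique_maximizer_def maximizer_def pairing_def)
    then show ?thesis by (rule that)
  next
    case (2 a b)
    have inner: "\<And>x. pairing (\<lambda>i. a $ i) x = a \<bullet> x" by (simp add: pairing_def inner_vec_def)
    have vb: "a \<bullet> v = b" using 2(2) by blast
    have only_v: "y = v" if "y \<in> P" "a \<bullet> v \<le> a \<bullet> y" for y
    proof -
      have "a \<bullet> y = b" using 2(1) that vb by fastforce
      then have "y \<in> P \<inter> {x. a \<bullet> x = b}" using that(1) by blast
      then show ?thesis using 2(2) by blast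
    qed
    have "maximizer (\<lambda>i. a $ i) P v"
      unfolding maximizer_def inner using 2(1) vP vb by auto
    moreover have "y = v" if "maximizer (\<lambda>i. a $ i) P y" for y
      using that only_v vP unfolding maximizer_def inner by blast
    ultimately have "unique_maximizer (\<lambda>i. a $ i) P v"
      unfolding unique_maximizer_def by blast
    then show ?thesis by (rule that)
  qed
qed

lemma nestohedron_hull:
  "nestohedron (B::('a::finite) set set) = convex hull (\<Sum>I\<in>B. (\<lambda>i. axis i (1::real)) ` I)"
proof -
  have "nestohedron B = (\<Sum>I\<in>B. simplex_of I)"
    unfolding nestohedron_def by (subst set_sum_alt) auto
  then show ?thesis unfolding simplex_of_def convex_hull_set_sum .
qed

lemma nestohedron_polyhedron: "polyhedron (nestohedron (B::('a::finite) set set))"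
  unfolding nestohedron_hull
  by (intro polytope_imp_polyhedron polytope_convex_hull finite_set_sum) auto

lemma finite_vertices_nestohedron: "finite (vertices (nestohedron (B::('a::finite) set set)))"
proof (rule finite_subset)
  show "vertices (nestohedron B) \<subseteq> (\<Sum>I\<in>B. (\<lambda>i. axis i (1::real)) ` I)"
    unfolding vertices_def nestohedron_hull using extreme_point_of_convex_hull by blast
qed (auto intro: finite_set_sum)

definition coordinate_simplex :: "('a::finite) set \<Rightarrow> (real^'a) set" where
  "coordinate_simplex I =
     {p. (\<forall>k. 0 \<le> p$k) \<and> (\<forall>k. k \<notin> I \<longrightarrow> p$k = 0) \<and> (\<Sum>k\<in>UNIV. p$k) = 1}"

lemma simplex_subset_coordinate_simplex: "simplex_of I \<subseteq> coordinate_simplex I"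
  unfolding simplex_of_def
proof (rule hull_minimal)
  show "(\<lambda>i. axis i 1) ` I \<subseteq> coordinate_simplex I"
    by (auto simp: coordinate_simplex_def axis_def)
  show "convex (coordinate_simplex I)"
    unfolding convex_def coordinate_simplex_def
    by (auto simp: sum.distrib sum_distrib_left[symmetric])
qed

text \<open>m is a strict argmax of w on I.  Defined for any linearly ordered weights, since
  it is used both for real weights and for the integer labels of tree partitions.\<close>
definition strict_argmax :: "('a \<Rightarrow> 'b::linorder) \<Rightarrow> 'a set \<Rightarrow> 'a \<Rightarrow> bool" where
  "strict_argmax w I m \<longleftrightarrow> m \<in> I \<and> (\<forall>k\<in>I. k \<noteq> m \<longrightarrow> w k < w m)"

lemma strict_argmax_le: "strict_argmax w I m \<Longrightarrow> k \<in> I \<Longrightarrow> w k \<le> w m"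
  unfolding strict_argmax_def by (cases "k = m") auto

lemma strict_argmax_of_nat:
  "strict_argmax (\<lambda>i. real (h i)) I m \<longleftrightarrow> strict_argmax (h :: 'a \<Rightarrow> nat) I m"
  by (simp add: strict_argmax_def)

lemma pairing_le_on_simplex:
  assumes "p \<in> simplex_of I" "\<And>k. k \<in> I \<Longrightarrow> w k \<le> t"
  shows "pairing w p \<le> t"
proof -
  have p: "p \<in> coordinate_simplex I" using assms(1) simplex_subset_coordinate_simplex by auto
  have "pairing w p \<le> (\<Sum>k\<in>UNIV. t * p$k)"
    unfolding pairing_def
  proof (rule sum_mono)
    fix k show "w k * p$k \<le> t * p$k"
      using p assms(2)[of k]
      by (cases "k \<in> I") (auto simp: coordinate_simplex_def intro: mult_right_mono)
  qed
  also have "\<dots> = t" using p by (simp add: coordinate_simplex_def sum_distrib_left[symmetric])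
  finally show ?thesis .
qed

lemma pairing_eq_on_simplex:
  assumes "p \<in> simplex_of I" "strict_argmax w I m" "pairing w p = w m"
  shows "p = axis m 1"
proof -
  have p: "p \<in> coordinate_simplex I" using assms(1) simplex_subset_coordinate_simplex by auto
  have total: "(\<Sum>k\<in>UNIV. p$k) = 1" using p by (simp add: coordinate_simplex_def)
  have "(\<Sum>k\<in>UNIV. (w m - w k) * p$k) = w m * (\<Sum>k\<in>UNIV. p$k) - pairing w p"
    by (simp add: pairing_def algebra_simps sum_subtractf sum_distrib_left)
  also have "\<dots> = 0" using total assms(3) by simp
  finally have "(\<Sum>k\<in>UNIV. (w m - w k) * p$k) = 0" .
  moreover have "\<forall>k\<in>UNIV. 0 \<le> (w m - w k) * p$k"
  proof
    fix k show "0 \<le> (w m - w k) * p$k"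
      using p strict_argmax_le[OF assms(2), of k]
      by (cases "k \<in> I") (auto simp: coordinate_simplex_def)
  qed
  ultimately have zero: "\<forall>k. (w m - w k) * p$k = 0"
    using sum_nonneg_eq_0_iff[of UNIV "\<lambda>k. (w m - w k) * p$k"] by auto
  have off: "p$k = 0" if "k \<noteq> m" for k
  proof (cases "k \<in> I")
    case True
    with assms(2) that have "w k < w m" by (auto simp: strict_argmax_def)
    with zero show ?thesis by (metis mult_eq_0_iff right_minus_eq less_irrefl)
  next
    case False with p show ?thesis by (auto simp: coordinate_simplex_def)
  qed
  have "(\<Sum>k\<in>UNIV. p$k) = p$m"
    by (subst sum.remove[of _ m]) (auto simp: off)
  with total off show ?thesis by (auto simp: vec_eq_iff axis_def)
qed

definition choice_point :: "('a::finite) set set \<Rightarrow> ('a set \<Rightarrow> 'a) \<Rightarrow> real^'a" where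
  "choice_point B c = (\<Sum>I\<in>B. axis (c I) 1)"

lemma pairing_choice_point: "pairing w (choice_point B c) = (\<Sum>I\<in>B. w (c I))"
  by (simp add: choice_point_def pairing_sum pairing_axis)

lemma choice_point_mem: "\<forall>I\<in>B. c I \<in> I \<Longrightarrow> choice_point B c \<in> nestohedron B"
  unfolding nestohedron_def choice_point_def simplex_of_def by (blast intro: hull_inc)

lemma choice_point_component: "choice_point B c $ k = real (card {I\<in>B. c I = k})"
proof -
  have "choice_point B c $ k = (\<Sum>I\<in>B. if c I = k then 1 else 0)"
    by (simp add: choice_point_def axis_def eq_commute)
  then show ?thesis by (simp add: sum.inter_filter[symmetric])
qed

lemma sum_choice_point: "(\<Sum>i\<in>I. choice_point B c $ i) = real (card {J\<in>B. c J \<in> I})"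
proof -
  have "(\<Sum>i\<in>I. choice_point B c $ i) = real (\<Sum>i\<in>I. card {J\<in>B. c J = i})"
    by (simp add: choice_point_component)
  also have "(\<Sum>i\<in>I. card {J\<in>B. c J = i}) = card (\<Union>i\<in>I. {J\<in>B. c J = i})"
    by (rule card_UN_disjoint[symmetric]) auto
  also have "(\<Union>i\<in>I. {J\<in>B. c J = i}) = {J\<in>B. c J \<in> I}" by auto
  finally show ?thesis .
qed

lemma choice_point_maximizer:
  assumes "\<forall>I\<in>B. c I \<in> I" "\<And>I k. I \<in> B \<Longrightarrow> k \<in> I \<Longrightarrow> w k \<le> w (c I)"
  shows "maximizer w (nestohedron B) (choice_point B c)"
  unfolding maximizer_def
proof (intro conjI ballI)
  show "choice_point B c \<in> nestohedron B" using choice_point_mem assms(1) .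
  fix y assume "y \<in> nestohedron B"
  then obtain p where y: "y = sum p B" and p: "\<forall>I\<in>B. p I \<in> simplex_of I"
    unfolding nestohedron_def by blast
  have "pairing w y = (\<Sum>I\<in>B. pairing w (p I))" by (simp add: y pairing_sum)
  also have "\<dots> \<le> (\<Sum>I\<in>B. w (c I))"
    by (rule sum_mono, rule pairing_le_on_simplex) (use p assms(2) in auto)
  finally show "pairing w y \<le> pairing w (choice_point B c)" by (simp add: pairing_choice_point)
qed

text \<open>Choosing strict argmaxes gives the unique maximiser: a maximiser must attain the
  bound on every summand simplex, hence be e_{c(I)} there.\<close>
lemma choice_point_unique_maximizer:
  assumes c: "\<forall>I\<in>B. strict_argmax w I (c I)"
  shows "unique_maximizer w (nestohedron B) (choice_point B c)"
  unfolding unique_maximizer_def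
proof (intro conjI allI impI)
  show m: "maximizer w (nestohedron B) (choice_point B c)"
    using c by (intro choice_point_maximizer) (auto simp: strict_argmax_def strict_argmax_le)
  fix y assume "maximizer w (nestohedron B) y"
  with m have y: "y \<in> nestohedron B" and eq: "pairing w y = pairing w (choice_point B c)"
    by (auto simp: maximizer_def intro: antisym)
  obtain p where y_sum: "y = sum p B" and p: "\<forall>I\<in>B. p I \<in> simplex_of I"
    using y unfolding nestohedron_def by blast
  have le: "\<forall>I\<in>B. pairing w (p I) \<le> w (c I)"
    using p c by (auto intro!: pairing_le_on_simplex elim: strict_argmax_le)
  have "(\<Sum>I\<in>B. w (c I) - pairing w (p I)) = 0"
    using eq by (simp add: sum_subtractf y_sum pairing_sum pairing_choice_point)
  then have "\<forall>I\<in>B. pairing w (p I) = w (c I)"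
    using sum_nonneg_eq_0_iff[of B "\<lambda>I. w (c I) - pairing w (p I)"] le by auto
  then have "\<forall>I\<in>B. p I = axis (c I) 1"
    using p c by (auto intro: pairing_eq_on_simplex)
  then show "y = choice_point B c" unfolding y_sum choice_point_def by (auto intro: sum.cong)
qed

lemma finite_has_argmax:
  assumes "finite I" "I \<noteq> {}"
  shows "\<exists>m\<in>I. \<forall>k\<in>I. (w::'a \<Rightarrow> 'b::linorder) k \<le> w m"
proof -
  have "Max (w ` I) \<in> w ` I" using assms by auto
  then obtain m where "m \<in> I" "w m = Max (w ` I)" by auto
  then show ?thesis using assms by (metis Max_ge finite_imageI imageI)
qed

text \<open>Conversely, if w has a unique maximiser on P_B then it has a strict argmax on every
  member of B: otherwise two different weak argmaxes on some I give two choice points,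
  both maximisers, that differ in a coordinate.\<close>
lemma unique_maximizer_is_choice_point:
  fixes B :: "('a::finite) set set"
  assumes ne: "\<forall>I\<in>B. I \<noteq> {}" and u: "unique_maximizer w (nestohedron B) x"
  obtains c where "\<forall>I\<in>B. strict_argmax w I (c I)" "x = choice_point B c"
proof -
  have uq: "\<And>y. maximizer w (nestohedron B) y \<Longrightarrow> y = x"
    using u by (simp add: unique_maximizer_def)
  have "\<forall>I\<in>B. \<exists>m\<in>I. \<forall>k\<in>I. w k \<le> w m"
    using ne finite_has_argmax[of _ w] by simp
  then obtain c where c: "\<forall>I\<in>B. c I \<in> I \<and> (\<forall>k\<in>I. w k \<le> w (c I))"
    using bchoice[of B "\<lambda>I m. m \<in> I \<and> (\<forall>k\<in>I. w k \<le> w m)"] by blast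
  have c_max: "maximizer w (nestohedron B) (choice_point B c)"
    using c by (intro choice_point_maximizer) auto
  have strict: "\<forall>I\<in>B. strict_argmax w I (c I)"
  proof (rule ccontr)
    assume "\<not> ?thesis"
    then obtain I k where I: "I \<in> B" and k: "k \<in> I" "k \<noteq> c I" "\<not> w k < w (c I)"
      using c unfolding strict_argmax_def by blast
    then have tie: "w k = w (c I)" using c by (meson antisym not_less)
    define c' where "c' = c(I := k)"
    have c'_max: "maximizer w (nestohedron B) (choice_point B c')"
      using c k I tie by (intro choice_point_maximizer) (auto simp: c'_def)
    have same: "choice_point B c' = choice_point B c" using uq[OF c'_max] uq[OF c_max] by simp
    have "card {J\<in>B. c' J = k} = card {J\<in>B. c J = k}"
      using arg_cong[OF same, of "\<lambda>x. x $ k"] by (simp add: choice_point_component)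
    moreover have "{J\<in>B. c' J = k} = insert I {J\<in>B. c J = k}" "I \<notin> {J\<in>B. c J = k}"
      using I k by (auto simp: c'_def)
    ultimately show False by simp
  qed
  moreover have "x = choice_point B c" using uq[OF c_max] by simp
  ultimately show ?thesis by (rule that)
qed

text \<open>A choice point determines the strict-argmax choice function producing it: comparing
  the values of the functional forces every other valid choice to pick the argmax.\<close>
lemma choice_point_inj:
  fixes w :: "'a::finite \<Rightarrow> real"
  assumes c: "\<forall>I\<in>B. strict_argmax w I (c I)" and c': "\<forall>I\<in>B. c' I \<in> I"
    and eq: "choice_point B c' = choice_point B c"
  shows "\<forall>I\<in>B. c' I = c I"
proof -
  have le: "\<forall>I\<in>B. w (c' I) \<le> w (c I)" using c c' by (meson strict_argmax_le)
  have "(\<Sum>I\<in>B. w (c I) - w (c' I)) = 0"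
    using arg_cong[OF eq, of "pairing w"] by (simp add: pairing_choice_point sum_subtractf)
  then have "\<forall>I\<in>B. w (c I) = w (c' I)"
    using sum_nonneg_eq_0_iff[of B "\<lambda>I. w (c I) - w (c' I)"] le by auto
  then show ?thesis using c c' unfolding strict_argmax_def by (metis less_irrefl)
qed

lemma unique_maximizer_choice_point_iff:
  fixes w w' :: "'a::finite \<Rightarrow> real"
  assumes c: "\<forall>I\<in>B. strict_argmax w I (c I)"
  shows "unique_maximizer w' (nestohedron B) (choice_point B c) \<longleftrightarrow>
         (\<forall>I\<in>B. strict_argmax w' I (c I))"
proof
  assume u: "unique_maximizer w' (nestohedron B) (choice_point B c)"
  have "\<forall>I\<in>B. I \<noteq> {}" using c by (auto simp: strict_argmax_def)
  then obtain c' where c': "\<forall>I\<in>B. strict_argmax w' I (c' I)"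
    and eq: "choice_point B c = choice_point B c'"
    using unique_maximizer_is_choice_point u by metis
  have "\<forall>I\<in>B. c' I = c I"
    using choice_point_inj[OF c] c' eq by (simp add: strict_argmax_def)
  with c' show "\<forall>I\<in>B. strict_argmax w' I (c I)" by simp
qed (rule choice_point_unique_maximizer)

lemma vertex_is_choice_point:
  fixes B :: "('a::finite) set set"
  assumes ne: "\<forall>I\<in>B. I \<noteq> {}" and v: "v \<in> vertices (nestohedron B)"
  obtains w :: "'a \<Rightarrow> real" and c where "\<forall>I\<in>B. strict_argmax w I (c I)" "v = choice_point B c"
proof -
  obtain w where "unique_maximizer w (nestohedron B) v"
    using extreme_point_unique_maximizer[OF nestohedron_polyhedron] v
    by (auto simp: vertices_def)
  then obtain c where "\<forall>I\<in>B. strict_argmax w I (c I)" "v = choice_point B c"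
    by (rule unique_maximizer_is_choice_point[OF ne])
  then show ?thesis by (rule that)
qed

lemma building_set_Union:
  assumes B: "building_set B" and F: "finite F" "F \<noteq> {}" "F \<subseteq> B" and x: "\<forall>J\<in>F. x \<in> J"
  shows "\<Union>F \<in> B"
  using F x
proof (induction F rule: finite_ne_induct)
  case (singleton J) then show ?case by simp
next
  case (insert J F)
  then have "\<Union>F \<in> B" "J \<in> B" "x \<in> J \<inter> \<Union>F" by auto
  then have "J \<union> \<Union>F \<in> B" using B unfolding building_set_def by blast
  then show ?case by simp
qed

text \<open>Its structure is governed by the blocks
  block(i) = \<Union>{J \<in> B. c(J) = i}, the largest member of B whose chosen element is i.\<close>
locale strict_choice =
  fixes B :: "('a::finite) set set" and w :: "'a \<Rightarrow> 'b::linorder" and c :: "'a set \<Rightarrow> 'a"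
  assumes building: "building_set B" and univ: "UNIV \<in> B"
    and argmax: "\<forall>I\<in>B. strict_argmax w I (c I)"
begin

abbreviation vertex :: "real^'a" where
  "vertex \<equiv> choice_point B c"

lemma singleton_mem: "{x} \<in> B"
  using building by (simp add: building_set_def)

lemma union_mem: "I \<in> B \<Longrightarrow> J \<in> B \<Longrightarrow> I \<inter> J \<noteq> {} \<Longrightarrow> I \<union> J \<in> B"
  using building by (simp add: building_set_def)

lemma choice_argmax: "I \<in> B \<Longrightarrow> strict_argmax w I (c I)"
  using argmax by blast

lemma choice_mem: "I \<in> B \<Longrightarrow> c I \<in> I"
  using choice_argmax by (simp add: strict_argmax_def)

lemma weight_le: "I \<in> B \<Longrightarrow> k \<in> I \<Longrightarrow> w k \<le> w (c I)"
  by (rule strict_argmax_le[OF choice_argmax])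

lemma choice_eqI: "I \<in> B \<Longrightarrow> k \<in> I \<Longrightarrow> w (c I) \<le> w k \<Longrightarrow> k = c I"
  using choice_argmax unfolding strict_argmax_def by (meson leD)

lemma choice_singleton: "c {x} = x"
  using choice_mem[OF singleton_mem] by simp

definition block :: "'a \<Rightarrow> 'a set" where
  "block i = \<Union>{J\<in>B. c J = i}"

lemma block_mem: "block i \<in> B"
  unfolding block_def
proof (rule building_set_Union[OF building])
  show "{J\<in>B. c J = i} \<noteq> {}" using singleton_mem[of i] choice_singleton[of i] by blast
  show "\<forall>J\<in>{J\<in>B. c J = i}. i \<in> J" using choice_mem by auto
qed auto

lemma in_block: "i \<in> block i"
  unfolding block_def using singleton_mem[of i] choice_singleton[of i] by blast

lemma subset_block: "J \<in> B \<Longrightarrow> J \<subseteq> block (c J)"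
  unfolding block_def by blast

lemma weight_le_block: "k \<in> block i \<Longrightarrow> w k \<le> w i"
  unfolding block_def by (auto intro: weight_le)

lemma choice_block: "c (block i) = i"
proof -
  have "w (c (block i)) \<le> w i" by (rule weight_le_block[OF choice_mem[OF block_mem]])
  then have "i = c (block i)" by (rule choice_eqI[OF block_mem in_block])
  then show ?thesis by simp
qed

lemma block_inj: "block i = block j \<Longrightarrow> i = j"
  using choice_block by metis

text \<open>A member I of B is closed if it contains every member whose chosen element lies in I.
  These are exactly the blocks, and (below) exactly the facets through the vertex.\<close>
definition closed_member :: "'a set \<Rightarrow> bool" where
  "closed_member I \<longleftrightarrow> I \<in> B \<and> (\<forall>J\<in>B. c J \<in> I \<longrightarrow> J \<subseteq> I)"

text \<open>Blocks are closed: if c(J) \<in> block(i), then J \<union> block(i) is a member whose elements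
  all weigh at most w(i), so its chosen element is i and it lies inside block(i).\<close>
lemma closed_block: "closed_member (block i)"
  unfolding closed_member_def
proof (intro conjI ballI impI)
  show "block i \<in> B" by (rule block_mem)
  fix J assume J: "J \<in> B" "c J \<in> block i"
  have U: "J \<union> block i \<in> B" using union_mem[OF J(1) block_mem] J choice_mem by blast
  have "w k \<le> w i" if "k \<in> J \<union> block i" for k
  proof (cases "k \<in> J")
    case True
    then have "w k \<le> w (c J)" by (rule weight_le[OF J(1)])
    also have "\<dots> \<le> w i" by (rule weight_le_block[OF J(2)])
    finally show ?thesis .
  next
    case False then show ?thesis using that by (auto intro: weight_le_block)
  qed
  then have "w (c (J \<union> block i)) \<le> w i" using choice_mem[OF U] by blast
  then have "i = c (J \<union> block i)" using choice_eqI[OF U] in_block by blast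
  then show "J \<subseteq> block i" using subset_block[OF U] by simp
qed

lemma block_choice_closed:
  assumes cl: "closed_member I"
  shows "block (c I) = I"
proof
  have I: "I \<in> B" using cl by (simp add: closed_member_def)
  show "I \<subseteq> block (c I)" using subset_block[OF I] .
  have "c (block (c I)) \<in> I" using choice_mem[OF I] by (simp add: choice_block)
  then show "block (c I) \<subseteq> I" using cl block_mem unfolding closed_member_def by blast
qed

lemma closed_UNIV: "closed_member UNIV"
  using univ by (simp add: closed_member_def)

text \<open>The vertex lies on the facet F_I iff I is closed: the coordinates of the vertex on I
  count the members choosing an element of I, which include all members inside I.\<close>
lemma vertex_in_facet_iff:
  assumes I: "I \<in> B"
  shows "vertex \<in> facet B I \<longleftrightarrow> closed_member I"
proof -
  have sub: "{J\<in>B. J \<subseteq> I} \<subseteq> {J\<in>B. c J \<in> I}" using choice_mem by blast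
  have mem: "vertex \<in> nestohedron B" by (rule choice_point_mem) (use choice_mem in blast)
  have "vertex \<in> facet B I \<longleftrightarrow> card {J\<in>B. c J \<in> I} = card {J\<in>B. J \<subseteq> I}"
    using mem by (simp add: facet_def sum_choice_point)
  also have "\<dots> \<longleftrightarrow> {J\<in>B. J \<subseteq> I} = {J\<in>B. c J \<in> I}"
  proof
    assume "card {J\<in>B. c J \<in> I} = card {J\<in>B. J \<subseteq> I}"
    then show "{J\<in>B. J \<subseteq> I} = {J\<in>B. c J \<in> I}" by (intro card_subset_eq[OF finite sub]) simp
  qed simp
  also have "\<dots> \<longleftrightarrow> {J\<in>B. c J \<in> I} \<subseteq> {J\<in>B. J \<subseteq> I}"
    using sub by blast
  also have "\<dots> \<longleftrightarrow> closed_member I"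
    using I unfolding closed_member_def by blast
  finally show ?thesis .
qed

lemma nested_of_vertex: "nested_of B vertex = {I. closed_member I \<and> I \<noteq> UNIV}"
  unfolding nested_of_def using vertex_in_facet_iff by (auto simp: closed_member_def)

lemma nested_or_UNIV_iff: "I \<in> nested_of B vertex \<union> {UNIV} \<longleftrightarrow> closed_member I"
  using nested_of_vertex closed_UNIV by auto

text \<open>The element i_I of a closed I is its chosen element: c(I) lies in no smaller closed
  member, and any other element k of I lies in the smaller closed member block(k).\<close>
lemma elem_of_closed: "closed_member I \<Longrightarrow> elem_of B vertex I = c I"
  unfolding elem_of_def
proof (rule the_equality)
  assume cl: "closed_member I"
  then have I: "I \<in> B" by (simp add: closed_member_def)
  have "c I \<notin> J" if "J \<in> nested_of B vertex" "J \<subset> I" for J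
    using that I by (auto simp: nested_of_vertex closed_member_def)
  then show "c I \<in> I - \<Union>{J \<in> nested_of B vertex. J \<subset> I}" using choice_mem[OF I] by blast
  fix k assume k: "k \<in> I - \<Union>{J \<in> nested_of B vertex. J \<subset> I}"
  show "k = c I"
  proof (rule ccontr)
    assume ne: "k \<noteq> c I"
    have "block k \<subseteq> I" using cl block_mem choice_block k unfolding closed_member_def by (metis DiffD1)
    moreover have "block k \<noteq> I" using block_choice_closed[OF cl] ne block_inj by metis
    ultimately have "block k \<in> nested_of B vertex" "block k \<subset> I"
      using closed_block by (auto simp: nested_of_vertex)
    with k in_block show False by blast
  qed
qed

lemma bleq_iff: "bleq B vertex i j \<longleftrightarrow> block i \<subseteq> block j"
proof
  assume "bleq B vertex i j"
  then obtain I J where cl: "closed_member I" "closed_member J"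
    and ij: "i = elem_of B vertex I" "j = elem_of B vertex J" and "I \<subseteq> J"
    unfolding bleq_def Bex_def nested_or_UNIV_iff by blast
  moreover have "block i = I" "block j = J"
    using ij elem_of_closed[OF cl(1)] elem_of_closed[OF cl(2)]
      block_choice_closed[OF cl(1)] block_choice_closed[OF cl(2)] by simp_all
  ultimately show "block i \<subseteq> block j" by simp
next
  assume "block i \<subseteq> block j"
  moreover have "i = elem_of B vertex (block i)" "j = elem_of B vertex (block j)"
    using elem_of_closed closed_block choice_block by auto
  ultimately show "bleq B vertex i j"
    unfolding bleq_def Bex_def nested_or_UNIV_iff using closed_block by blast
qed

lemma bless_iff: "bless B vertex i j \<longleftrightarrow> block i \<subset> block j"
  unfolding bless_def bleq_iff using block_inj by blast

text \<open>A labelling increasing along the edges of T_v increases along the whole order: a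
  strict inclusion of blocks that is not a cover is split by an intermediate block.\<close>
lemma increasing_along_tree:
  assumes par: "\<forall>u u'. tree_parent B vertex u u' \<longrightarrow> h u < h u'"
  shows "block u \<subset> block u' \<Longrightarrow> (h u :: nat) < h u'"
proof (induction "card (block u' - block u)" arbitrary: u u' rule: less_induct)
  case less
  show ?case
  proof (cases "tree_parent B vertex u u'")
    case True with par show ?thesis by blast
  next
    case False
    with less.prems obtain z where z: "block u \<subset> block z" "block z \<subset> block u'"
      unfolding tree_parent_def bless_iff by blast
    have "card (block z - block u) < card (block u' - block u)"
      using z by (intro psubset_card_mono) auto
    then have "h u < h z" using less.hyps z(1) by blast
    moreover have "card (block u' - block z) < card (block u' - block u)"
      using z by (intro psubset_card_mono) auto
    then have "h z < h u'" using less.hyps z(2) by blast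
    ultimately show ?thesis by simp
  qed
qed

lemma tree_partition_iff:
  "tree_partition B vertex h \<longleftrightarrow> (\<forall>u. 0 < h u) \<and> (\<forall>I\<in>B. strict_argmax h I (c I))"
proof
  assume tp: "tree_partition B vertex h"
  then have par: "\<forall>u u'. tree_parent B vertex u u' \<longrightarrow> h u < h u'"
    by (simp add: tree_partition_def)
  have "strict_argmax h I (c I)" if I: "I \<in> B" for I
    unfolding strict_argmax_def
  proof (intro conjI ballI impI)
    show "c I \<in> I" using choice_mem[OF I] .
    fix k assume k: "k \<in> I" "k \<noteq> c I"
    have "k \<in> block (c I)" using subset_block[OF I] k by blast
    then have "block k \<subseteq> block (c I)"
      using closed_block[of "c I"] block_mem[of k] choice_block[of k]
      unfolding closed_member_def by simp
    moreover have "block k \<noteq> block (c I)" using block_inj k by blast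
    ultimately show "h k < h (c I)" using increasing_along_tree[OF par] by blast
  qed
  with tp show "(\<forall>u. 0 < h u) \<and> (\<forall>I\<in>B. strict_argmax h I (c I))"
    by (simp add: tree_partition_def)
next
  assume h: "(\<forall>u. 0 < h u) \<and> (\<forall>I\<in>B. strict_argmax h I (c I))"
  have "h u < h u'" if "tree_parent B vertex u u'" for u u'
  proof -
    have "block u \<subset> block u'" using that by (simp add: tree_parent_def bless_iff)
    then have "u \<in> block u'" "u \<noteq> c (block u')" using in_block choice_block by auto
    then have "h u < h (c (block u'))"
      using h block_mem unfolding strict_argmax_def by blast
    then show ?thesis using choice_block by simp
  qed
  with h show "tree_partition B vertex h" by (simp add: tree_partition_def)
qed

end

lemma tree_partition_iff_unique_maximizer:
  fixes B :: "('a::finite) set set"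
  assumes B: "connected_building_set B" and v: "v \<in> vertices (nestohedron B)"
  shows "tree_partition B v h \<longleftrightarrow>
         (\<forall>i. 0 < h i) \<and> unique_maximizer (\<lambda>i. real (h i)) (nestohedron B) v"
proof -
  have building: "building_set B" and univ: "UNIV \<in> B"
    using B by (auto simp: connected_building_set_def)
  then have "\<forall>I\<in>B. I \<noteq> {}" by (simp add: building_set_def)
  then obtain w :: "'a \<Rightarrow> real" and c
    where c: "\<forall>I\<in>B. strict_argmax w I (c I)" and v_eq: "v = choice_point B c"
    using v by (rule vertex_is_choice_point)
  interpret strict_choice B w c using building univ c by unfold_locales
  show ?thesis
    unfolding v_eq tree_partition_iff unique_maximizer_choice_point_iff[OF c] strict_argmax_of_nat ..
qed

lemma unique_maximizer_unique:
  "unique_maximizer w P x \<Longrightarrow> unique_maximizer w P y \<Longrightarrow> x = y"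
  unfolding unique_maximizer_def by blast

lemma finite_monomial_fibre: "finite {h :: 'a::finite \<Rightarrow> nat. monomial_of h = M}"
proof (rule finite_subset)
  show "{h :: 'a \<Rightarrow> nat. monomial_of h = M} \<subseteq>
        {h. \<forall>x. (x \<in> UNIV \<longrightarrow> h x \<in> set_mset M) \<and> (x \<notin> UNIV \<longrightarrow> h x = 0)}"
    by (auto simp: monomial_of_def)
  show "finite {h :: 'a \<Rightarrow> nat. \<forall>x. (x \<in> UNIV \<longrightarrow> h x \<in> set_mset M) \<and> (x \<notin> UNIV \<longrightarrow> h x = 0)}"
    by (rule finite_set_of_finite_funs) auto
qed

theorem mainTheorem6:
  fixes B :: "('a::finite) set set"
  assumes "connected_building_set B"
  shows "\<forall>M. F_poly_coeff (nestohedron B) M =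
             (\<Sum>v\<in>vertices (nestohedron B). F_tree_coeff B v M)"
proof
  fix M
  let ?P = "nestohedron B" and ?V = "vertices (nestohedron B)"
  define S where "S v = {h. tree_partition B v h \<and> monomial_of h = M}" for v
  note tree_iff = tree_partition_iff_unique_maximizer[OF assms]
  have split: "{h. (\<forall>i. 0 < h i) \<and> generic ?P h \<and> monomial_of h = M} = (\<Union>v\<in>?V. S v)"
  proof (intro set_eqI iffI)
    fix h assume "h \<in> {h. (\<forall>i. 0 < h i) \<and> generic ?P h \<and> monomial_of h = M}"
    then obtain v where h: "\<forall>i. 0 < h i" "monomial_of h = M"
      and v: "unique_maximizer (\<lambda>i. real (h i)) ?P v"
      by (auto simp: generic_iff_unique_maximizer)
    have vV: "v \<in> ?V" using unique_maximizer_extreme_point[OF v] by (simp add: vertices_def)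
    then have "h \<in> S v" using tree_iff[OF vV] h v by (simp add: S_def)
    with vV show "h \<in> (\<Union>v\<in>?V. S v)" by blast
  next
    fix h assume "h \<in> (\<Union>v\<in>?V. S v)"
    then obtain v where vV: "v \<in> ?V" and h: "tree_partition B v h" "monomial_of h = M"
      by (auto simp: S_def)
    then have "(\<forall>i. 0 < h i) \<and> unique_maximizer (\<lambda>i. real (h i)) ?P v"
      using tree_iff[OF vV] by simp
    then show "h \<in> {h. (\<forall>i. 0 < h i) \<and> generic ?P h \<and> monomial_of h = M}"
      using h(2) generic_iff_unique_maximizer by blast
  qed
  have disjoint: "S v \<inter> S v' = {}" if vV: "v \<in> ?V" "v' \<in> ?V" and "v \<noteq> v'" for v v'
  proof -
    have "v = v'" if "h \<in> S v" "h \<in> S v'" for h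
    proof (rule unique_maximizer_unique)
      show "unique_maximizer (\<lambda>i. real (h i)) ?P v" using that(1) tree_iff[OF vV(1)] by (simp add: S_def)
      show "unique_maximizer (\<lambda>i. real (h i)) ?P v'" using that(2) tree_iff[OF vV(2)] by (simp add: S_def)
    qed
    then show ?thesis using \<open>v \<noteq> v'\<close> by blast
  qed
  have finite_S: "finite (S v)" for v
    unfolding S_def by (rule finite_subset[OF _ finite_monomial_fibre[of M]]) blast
  have "card (\<Union>v\<in>?V. S v) = (\<Sum>v\<in>?V. card (S v))"
    by (rule card_UN_disjoint[OF finite_vertices_nestohedron]) (use finite_S disjoint in auto)
  then show "F_poly_coeff ?P M = (\<Sum>v\<in>?V. F_tree_coeff B v M)"
    unfolding F_poly_coeff_def F_tree_coeff_def split S_def .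
qed
end
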